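(* Let $\boldsymbol\theta^*\in\mathbb{R}^d$ and consider two runs $(\mathbf a^{\langle t\rangle}_{(1)},\mathbf b^{\langle t\rangle}_{(1)})$ and $(\mathbf a^{\langle t\rangle}_{(2)},\mathbf b^{\langle t\rangle}_{(2)})$ of the iteration in the context, from initial points $(\mathbf a^{\langle 0\rangle}_{(1)},\mathbf b^{\langle 0\rangle}_{(1)})$ and $(\mathbf a^{\langle 0\rangle}_{(2)},\mathbf b^{\langle 0\rangle}_{(2)})$. (i) If $\mathbf a^{\langle 0\rangle}_{(1)}=-\mathbf a^{\langle 0\rangle}_{(2)}$ and $\mathbf b^{\langle 0\rangle}_{(1)}=\mathbf b^{\langle 0\rangle}_{(2)}$, then $\mathbf a^{\langle t\rangle}_{(1)}=-\mathbf a^{\langle t\rangle}_{(2)}$ and $\mathbf b^{\langle t\rangle}_{(1)}=\mathbf b^{\langle t\rangle}_{(2)}$ for all $t\ge0$. (ii) If $\mathbf b^{\langle 0\rangle}_{(1)}=-\mathbf b^{\langle 0\rangle}_{(2)}$ and $\mathbf a^{\langle 0\rangle}_{(1)}=\mathbf a^{\langle 0\rangle}_{(2)}$, then $\mathbf a^{\langle t\rangle}_{(1)}=\mathbf a^{\langle t\rangle}_{(2)}$ and $\mathbf b^{\langle t\rangle}_{(1)}=-\mathbf b^{\langle t\rangle}_{(2)}$ for all $t\ge0$.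
   Context: $\mathbf Y\sim\tfrac12N(-\boldsymbol\theta^*,I_d)+\tfrac12N(\boldsymbol\theta^*,I_d)$; $w_d(\mathbf y,\boldsymbol\theta)=\frac{e^{\langle\mathbf y,\boldsymbol\theta\rangle}}{e^{\langle\mathbf y,\boldsymbol\theta\rangle}+e^{-\langle\mathbf y,\boldsymbol\theta\rangle}}$. Given $\mathbf a^{\langle0\rangle},\mathbf b^{\langle0\rangle}\in\mathbb{R}^d$, for $t\ge0$: $\mathbf q^{\langle t+1\rangle}=\mathbb{E}[w_d(\mathbf Y-\mathbf a^{\langle t\rangle},\mathbf b^{\langle t\rangle})\mathbf Y]$, $p^{\langle t+1\rangle}=\mathbb{E}[w_d(\mathbf Y-\mathbf a^{\langle t\rangle},\mathbf b^{\langle t\rangle})]$, $\mathbf a^{\langle t+1\rangle}=\frac{\mathbf q^{\langle t+1\rangle}(1-2p^{\langle t+1\rangle})}{2p^{\langle t+1\rangle}(1-p^{\langle t+1\rangle})}$, $\mathbf b^{\langle t+1\rangle}=\frac{\mathbf q^{\langle t+1\rangle}}{2p^{\langle t+1\rangle}(1-p^{\langle t+1\rangle})}$. *)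

theory Defs
  imports "HOL-Analysis.Analysis"
begin

definition gauss_density :: "'a::euclidean_space \<Rightarrow> 'a \<Rightarrow> real" where
  "gauss_density mu y = (2 * pi) powr (- real DIM('a) / 2) * exp (- (norm (y - mu))\<^sup>2 / 2)"

definition mix_measure :: "'a::euclidean_space \<Rightarrow> 'a measure" where
  "mix_measure theta = density lborel
     (\<lambda>y. ennreal (1/2 * gauss_density (- theta) y + 1/2 * gauss_density theta y))"

definition wd :: "'a::euclidean_space \<Rightarrow> 'a \<Rightarrow> real" where
  "wd y theta = exp (inner y theta) / (exp (inner y theta) + exp (- inner y theta))"

definition em_step :: "'a::euclidean_space \<Rightarrow> 'a \<times> 'a \<Rightarrow> 'a \<times> 'a" where
  "em_step theta ab =
     (let a = fst ab; b = snd ab;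
          q = (\<integral>y. wd (y - a) b *\<^sub>R y \<partial>mix_measure theta);
          p = (\<integral>y. wd (y - a) b \<partial>mix_measure theta)
      in (((1 - 2 * p) / (2 * p * (1 - p))) *\<^sub>R q, (1 / (2 * p * (1 - p))) *\<^sub>R q))"

definition em_iter :: "'a::euclidean_space \<Rightarrow> 'a \<Rightarrow> 'a \<Rightarrow> nat \<Rightarrow> 'a \<times> 'a" where
  "em_iter theta a0 b0 t = (em_step theta ^^ t) (a0, b0)"

end

theory Submission
  imports Defs "HOL-Probability.Probability" "HOL-Library.While_Combinator"
begin

text \<open>
  Reflecting the sample, \<open>y \<mapsto> -y\<close>, leaves the symmetric mixture invariant, while it turns the
  weight \<open>w\<^sub>d(y - a, b)\<close> into \<open>1 - w\<^sub>d(y + a, b)\<close>; flipping \<open>b\<close> does the same without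
  reflecting. Since the mixture has mean zero, each of the two symmetries sends \<open>(p, q)\<close> to
  \<open>(1 - p, \<plusminus>q)\<close>, and the update formulas turn this into a sign change of exactly one of the
  two components of the next iterate.
\<close>

lemma wd_uminus_left: "wd (- z) b = 1 - wd z b"
proof -
  have "exp (inner z b) + exp (- inner z b) > 0" by (simp add: add_pos_pos)
  then show ?thesis unfolding wd_def by (simp add: field_simps)
qed

lemma wd_uminus_right: "wd z (- b) = 1 - wd z b"
  using wd_uminus_left[of z b] by (simp add: wd_def)

lemma wd_nonneg: "0 \<le> wd z b"
  unfolding wd_def by (simp add: add_pos_pos)

lemma wd_le_one: "wd z b \<le> 1"
  unfolding wd_def by (simp add: add_pos_pos)

lemma borel_measurable_wd [measurable]: "(\<lambda>y. wd (y - a) b) \<in> borel_measurable borel"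
  unfolding wd_def by measurable

lemma borel_measurable_gauss_density [measurable]: "gauss_density mu \<in> borel_measurable borel"
  unfolding gauss_density_def by measurable

lemma gauss_density_nonneg: "0 \<le> gauss_density mu y"
  unfolding gauss_density_def by simp

lemma gauss_density_uminus: "gauss_density (- mu) (- y) = gauss_density mu y"
  unfolding gauss_density_def by (simp add: norm_minus_commute)

lemma gauss_density_eq_prod_normal_density:
  fixes mu y :: "'a::euclidean_space"
  shows "gauss_density mu y = (\<Prod>b\<in>Basis. normal_density (mu \<bullet> b) 1 (y \<bullet> b))"
proof -
  have norm_eq: "(norm (y - mu))\<^sup>2 = (\<Sum>b\<in>Basis. (y \<bullet> b - mu \<bullet> b)\<^sup>2)"
    unfolding power2_norm_eq_inner
    by (subst euclidean_inner) (simp add: inner_diff_left power2_eq_square)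
  have const_eq: "(2 * pi) powr (- real DIM('a) / 2) = (1 / sqrt (2 * pi)) ^ DIM('a)"
  proof -
    have "(1 / sqrt (2 * pi)) ^ DIM('a) = ((2 * pi) powr (- 1 / 2)) ^ DIM('a)"
      by (simp add: powr_minus_divide powr_half_sqrt)
    then show ?thesis by (simp add: powr_realpow[symmetric] powr_powr)
  qed
  have "(\<Prod>b\<in>Basis. normal_density (mu \<bullet> b) 1 (y \<bullet> b))
      = (\<Prod>b\<in>Basis. 1 / sqrt (2 * pi) * exp (- (y \<bullet> b - mu \<bullet> b)\<^sup>2 / 2))"
    unfolding normal_density_def by simp
  also have "\<dots> = (1 / sqrt (2 * pi)) ^ DIM('a) * exp (\<Sum>b\<in>Basis. - (y \<bullet> b - mu \<bullet> b)\<^sup>2 / 2)"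
    by (simp only: prod.distrib prod_constant exp_sum[OF finite_Basis])
  also have "(\<Sum>b\<in>Basis. - (y \<bullet> b - mu \<bullet> b)\<^sup>2 / 2) = - (norm (y - mu))\<^sup>2 / 2"
    unfolding norm_eq by (simp add: sum_negf sum_divide_distrib)
  finally show ?thesis unfolding gauss_density_def const_eq by simp
qed

lemma nn_integral_gauss_density_mult_prod:
  fixes mu :: "'a::euclidean_space"
  assumes h_nonneg: "\<And>b x. 0 \<le> h b x" and [measurable]: "\<And>b. h b \<in> borel_measurable borel"
  shows "(\<integral>\<^sup>+y. ennreal (gauss_density mu y * (\<Prod>b\<in>Basis. h b (y \<bullet> b))) \<partial>lborel)
       = (\<Prod>b\<in>Basis. \<integral>\<^sup>+x. ennreal (normal_density (mu \<bullet> b) 1 x * h b x) \<partial>lborel)"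
proof -
  have "ennreal (gauss_density mu y * (\<Prod>b\<in>Basis. h b (y \<bullet> b)))
      = (\<Prod>b\<in>Basis. ennreal (normal_density (mu \<bullet> b) 1 (y \<bullet> b) * h b (y \<bullet> b)))" for y
    by (simp add: gauss_density_eq_prod_normal_density prod.distrib[symmetric] prod_ennreal h_nonneg)
  then show ?thesis
    by (simp del: ennreal_mult')
       (rule nn_integral_lborel_prod[where f="\<lambda>b x. ennreal (normal_density (mu \<bullet> b) 1 x * h b x)"],
        simp_all add: h_nonneg)
qed

lemma nn_integral_gauss_density: "(\<integral>\<^sup>+y. ennreal (gauss_density mu y) \<partial>lborel) = 1"
proof -
  have "(\<integral>\<^sup>+x. ennreal (normal_density m 1 x) \<partial>lborel) = 1" for m
    by (subst nn_integral_eq_integral) (auto intro: integrable_normal_density)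
  then show ?thesis
    using nn_integral_gauss_density_mult_prod[of "\<lambda>_ _. 1" mu] by simp
qed

lemma integrable_gauss_density_mult_coord:
  fixes mu :: "'a::euclidean_space"
  assumes b0: "b0 \<in> Basis"
  shows "integrable lborel (\<lambda>y. gauss_density mu y * (y \<bullet> b0))"
proof -
  define h where "h b x = (if b = b0 then \<bar>x\<bar> else 1)" for b and x :: real
  have finite_factor: "(\<integral>\<^sup>+x. ennreal (normal_density m 1 x * h b x) \<partial>lborel) < \<infinity>" for m b
  proof (cases "b = b0")
    case True
    have "integrable lborel (\<lambda>x. normal_density m 1 x * x)"
      by (rule integrable_normal_moment_nz_1) simp
    then show ?thesis using True by (simp add: h_def integrable_iff_bounded abs_mult)
  next
    case False
    have "integrable lborel (normal_density m 1)" by (rule integrable_normal_density) simp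
    then show ?thesis using False by (simp add: h_def integrable_iff_bounded)
  qed
  have h_measurable: "h b \<in> borel_measurable borel" for b
    unfolding h_def by (cases "b = b0") simp_all
  have "(\<Prod>b\<in>Basis. h b (y \<bullet> b)) = \<bar>y \<bullet> b0\<bar>" for y
    using b0 by (simp add: h_def prod.delta)
  then have "(\<integral>\<^sup>+y. ennreal (norm (gauss_density mu y * (y \<bullet> b0))) \<partial>lborel)
      = (\<Prod>b\<in>Basis. \<integral>\<^sup>+x. ennreal (normal_density (mu \<bullet> b) 1 x * h b x) \<partial>lborel)"
    using nn_integral_gauss_density_mult_prod[of h mu, OF _ h_measurable]
    by (simp add: h_def gauss_density_nonneg abs_mult)
  also have "\<dots> < \<infinity>"
    using finite_factor by (simp add: less_top[symmetric] ennreal_prod_eq_top)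
  finally show ?thesis by (simp add: integrable_iff_bounded)
qed

definition mix_density :: "'a::euclidean_space \<Rightarrow> 'a \<Rightarrow> real" where
  "mix_density theta y = 1/2 * gauss_density (- theta) y + 1/2 * gauss_density theta y"

lemma mix_measure_eq_density: "mix_measure theta = density lborel (\<lambda>y. ennreal (mix_density theta y))"
  unfolding mix_measure_def mix_density_def ..

lemma borel_measurable_mix_density [measurable]: "mix_density theta \<in> borel_measurable borel"
  unfolding mix_density_def by measurable

lemma mix_density_nonneg: "0 \<le> mix_density theta y"
  unfolding mix_density_def by (simp add: gauss_density_nonneg)

lemma mix_density_uminus: "mix_density theta (- y) = mix_density theta y"
  unfolding mix_density_def using gauss_density_uminus[of theta y] gauss_density_uminus[of "- theta" y]
  by simp

lemma sets_mix_measure [measurable_cong]: "sets (mix_measure theta) = sets borel"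
  unfolding mix_measure_def by simp

lemma has_bochner_integral_mix_density: "has_bochner_integral lborel (mix_density theta) 1"
proof -
  have "has_bochner_integral lborel (gauss_density mu) 1" for mu :: 'a
    by (rule has_bochner_integral_nn_integral)
       (simp_all add: gauss_density_nonneg nn_integral_gauss_density)
  then have "has_bochner_integral lborel (mix_density theta) (1/2 * 1 + 1/2 * 1)"
    unfolding mix_density_def by (intro has_bochner_integral_add has_bochner_integral_mult_right)
  then show ?thesis by simp
qed

lemma prob_space_mix_measure: "prob_space (mix_measure theta)"
proof
  show "emeasure (mix_measure theta) (space (mix_measure theta)) = 1"
    using has_bochner_integral_mix_density[of theta]
    by (simp add: mix_measure_eq_density emeasure_density nn_integral_eq_integral mix_density_nonneg
                  has_bochner_integral_iff)
qed

lemma finite_measure_mix_measure: "finite_measure (mix_measure theta)"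
  by (rule prob_space.finite_measure[OF prob_space_mix_measure])

lemma lborel_distr_uminus_euclidean: "distr lborel borel uminus = (lborel :: 'a::euclidean_space measure)"
  using lborel_affine[of "-1 :: real" "0 :: 'a"] by (simp add: density_1)

lemma distr_mix_measure_uminus: "distr (mix_measure theta) borel uminus = mix_measure theta"
  using density_distr[of "\<lambda>y. ennreal (mix_density theta y)" borel uminus lborel]
  by (simp add: mix_measure_eq_density lborel_distr_uminus_euclidean mix_density_uminus)

lemma integral_mix_measure_uminus:
  fixes f :: "'a::euclidean_space \<Rightarrow> 'b::{banach, second_countable_topology}"
  assumes [measurable]: "f \<in> borel_measurable borel"
  shows "(\<integral>y. f (- y) \<partial>mix_measure theta) = (\<integral>y. f y \<partial>mix_measure theta)"
  using integral_distr[of uminus "mix_measure theta" borel f]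
  by (simp add: distr_mix_measure_uminus)

lemma integrable_mix_measure_id: "integrable (mix_measure theta) (\<lambda>y. y)"
proof -
  have "integrable (mix_measure theta) (\<lambda>y. y \<bullet> b)" if "b \<in> Basis" for b
  proof -
    have "integrable lborel (\<lambda>y. mix_density theta y *\<^sub>R (y \<bullet> b))"
      unfolding mix_density_def
      using integrable_gauss_density_mult_coord[OF that, of theta]
            integrable_gauss_density_mult_coord[OF that, of "- theta"]
      by (simp add: distrib_right)
    then show ?thesis
      unfolding mix_measure_eq_density by (subst integrable_density) (auto simp: mix_density_nonneg)
  qed
  then have "integrable (mix_measure theta) (\<lambda>y. \<Sum>b\<in>Basis. (y \<bullet> b) *\<^sub>R b)"
    by (intro Bochner_Integration.integrable_sum integrable_scaleR_left)
  then show ?thesis by (simp add: euclidean_representation)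
qed

lemma integral_mix_measure_id: "(\<integral>y. y \<partial>mix_measure theta) = (0 :: 'a::euclidean_space)"
proof -
  have "- (\<integral>y. y \<partial>mix_measure theta) = (\<integral>y. y \<partial>mix_measure theta)"
    using integral_mix_measure_uminus[of "\<lambda>y. y" theta] by simp
  then have "(2 :: real) *\<^sub>R (\<integral>y. y \<partial>mix_measure theta) = 0"
    by (metis add.right_inverse scaleR_2)
  then show ?thesis by simp
qed

lemma integrable_mix_measure_wd: "integrable (mix_measure theta) (\<lambda>y. wd (y - a) b)"
  by (rule finite_measure.integrable_const_bound[OF finite_measure_mix_measure, where B=1])
     (simp_all add: wd_nonneg wd_le_one)

lemma integrable_mix_measure_wd_scaleR: "integrable (mix_measure theta) (\<lambda>y. wd (y - a) b *\<^sub>R y)"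
  by (rule Bochner_Integration.integrable_bound[OF integrable_mix_measure_id])
     (simp_all add: wd_nonneg wd_le_one mult_left_le_one_le)

definition em_p :: "'a::euclidean_space \<Rightarrow> 'a \<Rightarrow> 'a \<Rightarrow> real" where
  "em_p theta a b = (\<integral>y. wd (y - a) b \<partial>mix_measure theta)"

definition em_q :: "'a::euclidean_space \<Rightarrow> 'a \<Rightarrow> 'a \<Rightarrow> 'a" where
  "em_q theta a b = (\<integral>y. wd (y - a) b *\<^sub>R y \<partial>mix_measure theta)"

definition em_update :: "real \<Rightarrow> 'a::real_vector \<Rightarrow> 'a \<times> 'a" where
  "em_update p q = (((1 - 2 * p) / (2 * p * (1 - p))) *\<^sub>R q, (1 / (2 * p * (1 - p))) *\<^sub>R q)"

lemma em_step_eq_em_update: "em_step theta (a, b) = em_update (em_p theta a b) (em_q theta a b)"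
  unfolding em_step_def em_update_def em_p_def em_q_def Let_def by simp

lemma em_update_one_minus: "em_update (1 - p) q = apfst uminus (em_update p q)"
proof -
  have "1 - 2 * (1 - p) = - (1 - 2 * p)" and "2 * (1 - p) * (1 - (1 - p)) = 2 * p * (1 - p)"
    by (simp_all add: algebra_simps)
  then show ?thesis by (simp only: em_update_def minus_divide_left[symmetric] scaleR_left.minus apfst_conv)
qed

lemma em_update_one_minus_uminus: "em_update (1 - p) (- q) = apsnd uminus (em_update p q)"
  using em_update_one_minus[of p "- q"] by (simp add: em_update_def)

lemma integral_mix_measure_one_minus_wd:
  "(\<integral>y. 1 - wd (y - a) b \<partial>mix_measure theta) = 1 - (\<integral>y. wd (y - a) b \<partial>mix_measure theta)"
  using prob_space.prob_space[OF prob_space_mix_measure, of theta]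
  by (subst Bochner_Integration.integral_diff)
     (simp_all add: integrable_mix_measure_wd finite_measure.integrable_const[OF finite_measure_mix_measure])

lemma em_p_uminus_a: "em_p theta (- a) b = 1 - em_p theta a b"
proof -
  have "em_p theta (- a) b = (\<integral>y. wd (- y + a) b \<partial>mix_measure theta)"
    unfolding em_p_def using integral_mix_measure_uminus[of "\<lambda>y. wd (y + a) b" theta]
    by (simp add: wd_def)
  also have "\<dots> = (\<integral>y. 1 - wd (y - a) b \<partial>mix_measure theta)"
    using wd_uminus_left[of "y - a" b for y] by simp
  also have "\<dots> = 1 - em_p theta a b"
    unfolding em_p_def by (rule integral_mix_measure_one_minus_wd)
  finally show ?thesis .
qed

lemma em_q_uminus_a: "em_q theta (- a) b = em_q theta a b"
proof -
  have "em_q theta (- a) b = (\<integral>y. wd (- y + a) b *\<^sub>R (- y) \<partial>mix_measure theta)"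
    unfolding em_q_def using integral_mix_measure_uminus[of "\<lambda>y. wd (y + a) b *\<^sub>R y" theta]
    by (simp add: wd_def)
  also have "\<dots> = (\<integral>y. wd (y - a) b *\<^sub>R y - y \<partial>mix_measure theta)"
    using wd_uminus_left[of "y - a" b for y] by (simp add: scaleR_diff_left)
  also have "\<dots> = em_q theta a b"
    unfolding em_q_def
    by (simp add: integrable_mix_measure_wd_scaleR integrable_mix_measure_id integral_mix_measure_id)
  finally show ?thesis .
qed

lemma em_p_uminus_b: "em_p theta a (- b) = 1 - em_p theta a b"
  unfolding em_p_def wd_uminus_right by (rule integral_mix_measure_one_minus_wd)

lemma em_q_uminus_b: "em_q theta a (- b) = - em_q theta a b"
proof -
  have "em_q theta a (- b) = (\<integral>y. y - wd (y - a) b *\<^sub>R y \<partial>mix_measure theta)"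
    unfolding em_q_def wd_uminus_right by (simp add: scaleR_diff_left)
  also have "\<dots> = - em_q theta a b"
    unfolding em_q_def
    by (simp add: integrable_mix_measure_wd_scaleR integrable_mix_measure_id integral_mix_measure_id)
  finally show ?thesis .
qed

lemma em_step_apfst_uminus: "em_step theta (apfst uminus x) = apfst uminus (em_step theta x)"
  by (cases x) (simp add: em_step_eq_em_update em_p_uminus_a em_q_uminus_a em_update_one_minus)

lemma em_step_apsnd_uminus: "em_step theta (apsnd uminus x) = apsnd uminus (em_step theta x)"
  by (cases x)
     (simp add: em_step_eq_em_update em_p_uminus_b em_q_uminus_b em_update_one_minus_uminus)

lemma em_iter_uminus_a: "em_iter theta (- a) b t = apfst uminus (em_iter theta a b t)"
  using funpow_commute[where f="apfst uminus" and c="em_step theta" and c'="em_step theta"]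
  by (simp add: em_iter_def em_step_apfst_uminus)

lemma em_iter_uminus_b: "em_iter theta a (- b) t = apsnd uminus (em_iter theta a b t)"
  using funpow_commute[where f="apsnd uminus" and c="em_step theta" and c'="em_step theta"]
  by (simp add: em_iter_def em_step_apsnd_uminus)

theorem lemma5:
  fixes theta a01 b01 a02 b02 :: "'a::euclidean_space"
  shows "(a01 = - a02 \<and> b01 = b02 \<longrightarrow>
            (\<forall>t. fst (em_iter theta a01 b01 t) = - fst (em_iter theta a02 b02 t) \<and>
                 snd (em_iter theta a01 b01 t) = snd (em_iter theta a02 b02 t)))
       \<and> (b01 = - b02 \<and> a01 = a02 \<longrightarrow>
            (\<forall>t. fst (em_iter theta a01 b01 t) = fst (em_iter theta a02 b02 t) \<and>
                 snd (em_iter theta a01 b01 t) = - snd (em_iter theta a02 b02 t)))"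
  by (simp add: em_iter_uminus_a em_iter_uminus_b)

end
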